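(* Let $n$ be a positive odd integer. Then $$ \sum_{k=0}^{n-1}\frac{(aq;q^2)_k\,(bq;q^2)_k\,(x;q^2)_k\, q^{2k}}{(q^2;q^2)_k\,(abq^4;q^4)_k} \equiv (-1)^{(n-1)/2}\sum_{k=0}^{n-1}\frac{(aq;q^2)_k\,(bq;q^2)_k\,(-x;q^2)_k\, q^{2k}}{(q^2;q^2)_k\,(abq^4;q^4)_k} \pmod{(1-aq^n)(1-bq^n)}. $$
   Context: $a,b,q,x$ are indeterminates. The $q$-shifted factorial is $(y;q)_0=1$ and $(y;q)_m=(1-y)(1-yq)\cdots(1-yq^{m-1})$ for $m\geqslant1$. For rational functions $A,B$ and a polynomial $P$, $A\equiv B\pmod P$ means $A-B=P\cdot C/D$ for polynomials $C,D$ with $D$ coprime to $P$. *)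

theory Defs
  imports "HOL-Computational_Algebra.Polynomial" "HOL-Computational_Algebra.Fraction_Field"
begin

text \<open>Polynomials in the four indeterminates x, q, b, a (nested univariate
polynomials over the rationals) and rational functions = their fraction field.\<close>

type_synonym mpoly4 = "rat poly poly poly poly"
type_synonym ratfun4 = "mpoly4 fract"

definition varX :: mpoly4 where "varX = [:0, 1:]"
definition varQ :: mpoly4 where "varQ = [:[:0, 1:]:]"
definition varB :: mpoly4 where "varB = [:[:[:0, 1:]:]:]"
definition varA :: mpoly4 where "varA = [:[:[:[:0, 1:]:]:]:]"

definition qpoch :: "'a::comm_ring_1 \<Rightarrow> 'a \<Rightarrow> nat \<Rightarrow> 'a" where
  "qpoch y z m = (\<Prod>j<m. 1 - y * z ^ j)"

definition cong_rf :: "ratfun4 \<Rightarrow> ratfun4 \<Rightarrow> mpoly4 \<Rightarrow> bool" where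
  "cong_rf A B P \<longleftrightarrow> (\<exists>C D. D \<noteq> 0 \<and> coprime D P \<and>
      A - B = Fract P 1 * Fract C 1 / Fract D 1)"

end

theory Submission
  imports Defs "HOL-Computational_Algebra.Polynomial_Factorial" "HOL-Computational_Algebra.Field_as_Ring"
begin

text \<open>Modulo 1 - a q^n with n = 2N + 1 we have aq = q^-2N, so (aq;q^2)_k vanishes for k > N and the
  series becomes a terminating series F(x) in p = q^2 and B = bq. This series satisfies the
  reflection F(x) = (-1)^N F(-x). For B = C^2 p^(N-1) one expands (x;p)_k / (C;p)_k by the
  q-Chu-Vandermonde formula, exchanges the summations and evaluates the inner sum by the
  terminating q-Chu-Vandermonde formula; the resulting sum changes by (-1)^N under
  (C, x) \<mapsto> (-C, -x). Cleared of denominators, the reflection defect is a polynomial in B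
  with infinitely many roots, hence zero. By the symmetry in a and b the same congruence holds
  modulo 1 - b q^n, and the two combine: both factors are coprime primes, and all denominators
  are coprime to them, as evaluation at rational points of the two hypersurfaces shows.\<close>

section \<open>Ring homomorphisms and evaluation of nested polynomials\<close>

definition is_ring_hom :: "('a::comm_ring_1 \<Rightarrow> 'b::comm_ring_1) \<Rightarrow> bool" where
  "is_ring_hom f \<longleftrightarrow>
     f 0 = 0 \<and> f 1 = 1 \<and> (\<forall>a b. f (a + b) = f a + f b) \<and> (\<forall>a b. f (a * b) = f a * f b)"

lemma is_ring_homD:
  assumes "is_ring_hom f"
  shows "f 0 = 0" "f 1 = 1" "f (a + b) = f a + f b" "f (a * b) = f a * f b"
  using assms by (auto simp: is_ring_hom_def)

lemma is_ring_hom_uminus: "is_ring_hom f \<Longrightarrow> f (- a) = - f a"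
  using is_ring_homD(3)[of f a "- a"] is_ring_homD(1)[of f] by (simp add: eq_neg_iff_add_eq_0 add.commute)

lemma is_ring_hom_diff: "is_ring_hom f \<Longrightarrow> f (a - b) = f a - f b"
  using is_ring_homD(3)[of f a "- b"] is_ring_hom_uminus[of f b] by simp

lemma is_ring_hom_power: "is_ring_hom f \<Longrightarrow> f (a ^ k) = f a ^ k"
  by (induction k) (simp_all add: is_ring_homD)

lemma is_ring_hom_dvd: "is_ring_hom f \<Longrightarrow> a dvd b \<Longrightarrow> f a dvd f b"
  by (auto simp: dvd_def is_ring_homD)

lemma is_ring_hom_unit: "is_ring_hom f \<Longrightarrow> is_unit a \<Longrightarrow> is_unit (f a)"
  using is_ring_hom_dvd[of f a 1] by (simp add: is_ring_homD)

lemma is_ring_hom_comp: "is_ring_hom f \<Longrightarrow> is_ring_hom g \<Longrightarrow> is_ring_hom (\<lambda>x. g (f x))"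
  by (simp add: is_ring_hom_def)

lemma is_ring_hom_id: "is_ring_hom (\<lambda>x. x)"
  by (simp add: is_ring_hom_def)

lemma is_ring_hom_const_poly: "is_ring_hom (\<lambda>c. [:c:])"
  by (simp add: is_ring_hom_def pCons_one)

lemmas is_ring_hom_simps = is_ring_homD is_ring_hom_uminus is_ring_hom_diff is_ring_hom_power

definition eval_poly_hom :: "('a::comm_ring_1 \<Rightarrow> 'b::comm_ring_1) \<Rightarrow> 'b \<Rightarrow> 'a poly \<Rightarrow> 'b" where
  "eval_poly_hom f z p = poly (map_poly f p) z"

lemma eval_poly_hom_0 [simp]: "eval_poly_hom f z 0 = 0"
  by (simp add: eval_poly_hom_def)

lemma eval_poly_hom_pCons: "is_ring_hom f \<Longrightarrow> eval_poly_hom f z (pCons a p) = f a + z * eval_poly_hom f z p"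
  by (simp add: eval_poly_hom_def map_poly_pCons is_ring_homD)

lemma eval_poly_hom_add:
  assumes "is_ring_hom f"
  shows "eval_poly_hom f z (p + q) = eval_poly_hom f z p + eval_poly_hom f z q"
proof -
  have "map_poly f (p + q) = map_poly f p + map_poly f q"
    by (intro poly_eqI) (simp add: coeff_map_poly is_ring_homD[OF assms])
  then show ?thesis by (simp add: eval_poly_hom_def)
qed

lemma eval_poly_hom_smult:
  assumes "is_ring_hom f"
  shows "eval_poly_hom f z (smult a p) = f a * eval_poly_hom f z p"
proof -
  have "map_poly f (smult a p) = smult (f a) (map_poly f p)"
    by (rule map_poly_smult) (simp_all add: is_ring_homD[OF assms])
  then show ?thesis by (simp add: eval_poly_hom_def)
qed

lemma eval_poly_hom_mult:
  assumes f: "is_ring_hom f"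
  shows "eval_poly_hom f z (p * q) = eval_poly_hom f z p * eval_poly_hom f z q"
proof (induction p)
  case (pCons a p)
  have "eval_poly_hom f z (pCons a p * q) = eval_poly_hom f z (smult a q + pCons 0 (p * q))"
    by (simp add: mult_pCons_left)
  also have "\<dots> = eval_poly_hom f z (pCons a p) * eval_poly_hom f z q"
    using pCons f by (simp add: eval_poly_hom_add eval_poly_hom_smult eval_poly_hom_pCons
        is_ring_homD algebra_simps)
  finally show ?case .
qed simp

lemma is_ring_hom_eval_poly_hom:
  assumes "is_ring_hom f"
  shows "is_ring_hom (eval_poly_hom f z)"
  using assms eval_poly_hom_add[OF assms] eval_poly_hom_mult[OF assms]
  by (simp add: is_ring_hom_def eval_poly_hom_def)

lemma eval_poly_hom_comp:
  assumes f: "is_ring_hom f" and g: "is_ring_hom g"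
  shows "g (eval_poly_hom f z p) = eval_poly_hom (\<lambda>x. g (f x)) (g z) p"
  by (induction p)
    (simp_all add: eval_poly_hom_pCons[OF f] eval_poly_hom_pCons[OF is_ring_hom_comp[OF f g]]
      is_ring_homD[OF g])

lemma eval_poly_hom_embedding:
  assumes g: "is_ring_hom g"
  shows "eval_poly_hom (\<lambda>c. g [:c:]) (g [:0, 1:]) r = g r"
proof (induction r)
  case 0
  show ?case using g by (simp add: is_ring_homD)
next
  case (pCons a r)
  have "pCons a r = [:a:] + [:0, 1:] * r"
    by (simp add: algebra_simps)
  then have "g (pCons a r) = g [:a:] + g [:0, 1:] * g r"
    using g by (metis is_ring_homD(3,4))
  then show ?case
    using pCons by (simp add: eval_poly_hom_pCons is_ring_hom_comp[OF is_ring_hom_const_poly g])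
qed

definition eval4 :: "(rat \<Rightarrow> 'b::comm_ring_1) \<Rightarrow> 'b \<Rightarrow> 'b \<Rightarrow> 'b \<Rightarrow> 'b \<Rightarrow> mpoly4 \<Rightarrow> 'b" where
  "eval4 f X Q B A = eval_poly_hom (eval_poly_hom (eval_poly_hom (eval_poly_hom f A) B) Q) X"

lemma is_ring_hom_eval4: "is_ring_hom f \<Longrightarrow> is_ring_hom (eval4 f X Q B A)"
  unfolding eval4_def by (intro is_ring_hom_eval_poly_hom)

lemma eval4_vars:
  assumes "is_ring_hom f"
  shows "eval4 f X Q B A varX = X" "eval4 f X Q B A varQ = Q"
    "eval4 f X Q B A varB = B" "eval4 f X Q B A varA = A"
  using assms by (simp_all add: eval4_def varX_def varQ_def varB_def varA_def
      eval_poly_hom_pCons is_ring_hom_eval_poly_hom is_ring_homD)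

lemma eval4_comp:
  assumes f: "is_ring_hom f" and g: "is_ring_hom g"
  shows "g (eval4 f X Q B A p) = eval4 (\<lambda>x. g (f x)) (g X) (g Q) (g B) (g A) p"
proof -
  have r1: "is_ring_hom (eval_poly_hom f A)"
    using f by (rule is_ring_hom_eval_poly_hom)
  then have r2: "is_ring_hom (eval_poly_hom (eval_poly_hom f A) B)"
    by (rule is_ring_hom_eval_poly_hom)
  then have r3: "is_ring_hom (eval_poly_hom (eval_poly_hom (eval_poly_hom f A) B) Q)"
    by (rule is_ring_hom_eval_poly_hom)
  show ?thesis
    unfolding eval4_def eval_poly_hom_comp[OF r3 g]
    by (simp add: eval_poly_hom_comp[OF r2 g] eval_poly_hom_comp[OF r1 g]
        eval_poly_hom_comp[OF f g] comp_def)
qed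

lemma eval4_at_vars: "eval4 (\<lambda>c. [:[:[:[:c:]:]:]:]) varX varQ varB varA p = p"
proof -
  have g1: "is_ring_hom (\<lambda>r::rat poly. [:[:[:r:]:]:])"
    and g2: "is_ring_hom (\<lambda>r::rat poly poly. [:[:r:]:])"
    and g3: "is_ring_hom (\<lambda>r::rat poly poly poly. [:r:])"
    by (simp_all add: is_ring_hom_def pCons_one)
  have "eval_poly_hom (\<lambda>c. [:[:[:[:c:]:]:]:]) varA = (\<lambda>r. [:[:[:r:]:]:])"
    using eval_poly_hom_embedding[OF g1] by (simp add: varA_def fun_eq_iff)
  moreover have "eval_poly_hom (\<lambda>r. [:[:[:r:]:]:]) varB = (\<lambda>s. [:[:s:]:])"
    using eval_poly_hom_embedding[OF g2] by (simp add: varB_def fun_eq_iff)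
  moreover have "eval_poly_hom (\<lambda>s. [:[:s:]:]) varQ = (\<lambda>t. [:t:])"
    using eval_poly_hom_embedding[OF g3] by (simp add: varQ_def fun_eq_iff)
  moreover have "eval_poly_hom (\<lambda>t. [:t:]) varX p = p"
    using eval_poly_hom_embedding[OF is_ring_hom_id] by (simp add: varX_def)
  ultimately show ?thesis by (simp add: eval4_def)
qed

section \<open>The prime factors of the modulus\<close>

text \<open>The substitution A \<mapsto> tA, B \<mapsto> tB into polynomials in a new outer variable t. Setting
  t = 1 undoes it, so a factorisation of P yields one of its image, where degrees in t can be
  compared.\<close>

definition scale_AB :: "mpoly4 \<Rightarrow> mpoly4 poly" where
  "scale_AB = eval4 (\<lambda>c. [:[:[:[:[:c:]:]:]:]:]) [:varX:] [:varQ:] [:0, varB:] [:0, varA:]"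

lemma is_ring_hom_scale_AB: "is_ring_hom scale_AB"
  unfolding scale_AB_def by (rule is_ring_hom_eval4) (simp add: is_ring_hom_def pCons_one)

lemma scale_AB_vars: "scale_AB varQ = [:varQ:]" "scale_AB varA = [:0, varA:]" "scale_AB varB = [:0, varB:]"
  unfolding scale_AB_def by (simp_all add: eval4_vars is_ring_hom_def pCons_one)

lemma poly_scale_AB_1: "poly (scale_AB p) 1 = p"
proof -
  have "is_ring_hom (\<lambda>c::rat. [:[:[:[:[:c:]:]:]:]:] :: mpoly4 poly)"
    and "is_ring_hom (\<lambda>s::mpoly4 poly. poly s 1)"
    by (simp_all add: is_ring_hom_def pCons_one)
  then have "poly (scale_AB p) 1 = eval4 (\<lambda>c. [:[:[:[:c:]:]:]:]) varX varQ varB varA p"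
    unfolding scale_AB_def by (subst eval4_comp) simp_all
  then show ?thesis by (simp add: eval4_at_vars)
qed

lemma irreducible_one_minus_scaled:
  fixes U :: mpoly4
  assumes scale: "scale_AB U = [:0, U:]" and U: "U \<noteq> 0"
  shows "irreducible (1 - U * varQ ^ n)"
proof -
  let ?P = "1 - U * varQ ^ n"
  note hom = is_ring_hom_simps[OF is_ring_hom_scale_AB]
  have "U * varQ ^ n \<noteq> 0" using U by (simp add: varQ_def)
  moreover have "scale_AB ?P = [:1, - (U * varQ ^ n):]"
    by (rule poly_eqI) (simp add: hom scale scale_AB_vars poly_const_pow coeff_pCons mult.commute split: nat.split)
  ultimately have deg: "degree (scale_AB ?P) = 1" and coeff0: "coeff (scale_AB ?P) 0 = 1"
    by simp_all
  have unit_if_const: "is_unit r" if "degree (scale_AB r) = 0" "coeff (scale_AB r) 0 * d = 1" for r d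
  proof -
    have "scale_AB r = [:coeff (scale_AB r) 0:]"
      using that(1) by (metis degree_eq_zeroE coeff_pCons_0)
    then have "r = coeff (scale_AB r) 0"
      using poly_scale_AB_1[of r] by (metis poly_pCons poly_0 mult_zero_right add_0_right)
    then show ?thesis using that(2) by (metis dvdI)
  qed
  show ?thesis
  proof (rule irreducibleI)
    show "?P \<noteq> 0" using deg hom(1) by force
    show "\<not> ?P dvd 1"
      using deg is_ring_hom_unit[OF is_ring_hom_scale_AB, of ?P] by (auto simp: is_unit_poly_iff)
    fix g h assume gh: "?P = g * h"
    then have gh': "scale_AB ?P = scale_AB g * scale_AB h" by (simp add: hom)
    then have "scale_AB g \<noteq> 0" "scale_AB h \<noteq> 0" using deg by auto
    then have "degree (scale_AB g) + degree (scale_AB h) = 1"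
      using degree_mult_eq gh' deg by metis
    moreover have c0: "coeff (scale_AB g) 0 * coeff (scale_AB h) 0 = 1"
      using gh' coeff0 by (simp add: coeff_mult_0)
    ultimately show "g dvd 1 \<or> h dvd 1"
    proof (cases "degree (scale_AB g) = 0")
      case False
      with \<open>degree (scale_AB g) + degree (scale_AB h) = 1\<close> have "degree (scale_AB h) = 0" by simp
      then show ?thesis using unit_if_const[of h "coeff (scale_AB g) 0"] c0 by (simp add: mult.commute)
    qed (use unit_if_const[of g "coeff (scale_AB h) 0"] in simp)
  qed
qed

lemma prime_elem_one_minus_A: "prime_elem (1 - varA * varQ ^ n)"
  by (rule irreducible_imp_prime_elem_gcd, rule irreducible_one_minus_scaled[OF scale_AB_vars(2)])
    (simp add: varA_def)

lemma prime_elem_one_minus_B: "prime_elem (1 - varB * varQ ^ n)"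
  by (rule irreducible_imp_prime_elem_gcd, rule irreducible_one_minus_scaled[OF scale_AB_vars(3)])
    (simp add: varB_def)

lemma coprime_if_eval_nonzero:
  fixes P D :: "'a::{factorial_semiring_gcd, comm_ring_1}"
  assumes "prime_elem P" "is_ring_hom h" "h P = 0" "h D \<noteq> 0"
  shows "coprime D P"
  using assms prime_elem_imp_coprime[of P D] is_ring_hom_dvd[of h P D]
  by (auto simp: coprime_commute)

definition eval_rootA :: "nat \<Rightarrow> mpoly4 \<Rightarrow> rat" where
  "eval_rootA n = eval4 (\<lambda>c. c) 0 2 1 (1 / 2 ^ n)"

definition eval_rootB :: "nat \<Rightarrow> mpoly4 \<Rightarrow> rat" where
  "eval_rootB n = eval4 (\<lambda>c. c) 0 2 (1 / 2 ^ n) 1"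

lemma is_ring_hom_eval_rootA: "is_ring_hom (eval_rootA n)"
  unfolding eval_rootA_def by (rule is_ring_hom_eval4[OF is_ring_hom_id])

lemma is_ring_hom_eval_rootB: "is_ring_hom (eval_rootB n)"
  unfolding eval_rootB_def by (rule is_ring_hom_eval4[OF is_ring_hom_id])

lemma eval_rootA_vars: "eval_rootA n varQ = 2" "eval_rootA n varA = 1 / 2 ^ n" "eval_rootA n varB = 1"
  unfolding eval_rootA_def by (simp_all add: eval4_vars[OF is_ring_hom_id])

lemma eval_rootB_vars: "eval_rootB n varQ = 2" "eval_rootB n varA = 1" "eval_rootB n varB = 1 / 2 ^ n"
  unfolding eval_rootB_def by (simp_all add: eval4_vars[OF is_ring_hom_id])

lemmas eval_rootA_simps = is_ring_hom_simps[OF is_ring_hom_eval_rootA] eval_rootA_vars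
lemmas eval_rootB_simps = is_ring_hom_simps[OF is_ring_hom_eval_rootB] eval_rootB_vars

section \<open>q-series identities\<close>

lemma qpoch_0 [simp]: "qpoch y z 0 = 1"
  by (simp add: qpoch_def)

lemma qpoch_Suc: "qpoch y z (Suc m) = qpoch y z m * (1 - y * z ^ m)"
  by (simp add: qpoch_def)

lemma qpoch_add: "qpoch y z (m + k) = qpoch y z m * qpoch (y * z ^ m) z k"
  by (induction k) (simp_all add: qpoch_Suc power_add mult_ac)

lemma qpoch_Suc_left: "qpoch y z (Suc m) = (1 - y) * qpoch (y * z) z m"
  using qpoch_add[of y z 1 m] by (simp add: qpoch_def)

lemma qpoch_split: "j \<le> k \<Longrightarrow> qpoch y z k = qpoch y z j * qpoch (y * z ^ j) z (k - j)"
  using qpoch_add[of y z j "k - j"] by simp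

lemma qpoch_nonzero: "(\<And>i. i < m \<Longrightarrow> y * z ^ i \<noteq> (1::'a::field)) \<Longrightarrow> qpoch y z m \<noteq> 0"
  by (simp add: qpoch_def)

lemma qpoch_nonzero_le: "qpoch y z m \<noteq> (0::'a::field) \<Longrightarrow> k \<le> m \<Longrightarrow> qpoch y z k \<noteq> 0"
  using qpoch_split[of k m y z] by auto

lemma qpoch_self_nonzero:
  fixes p :: "'a::field"
  assumes "\<forall>i. 0 < i \<longrightarrow> p ^ i \<noteq> 1"
  shows "qpoch p p m \<noteq> 0"
  using assms by (intro qpoch_nonzero) (metis power_Suc zero_less_Suc)

lemma qpoch_square: "qpoch (c ^ 2) (p ^ 2) k = qpoch c p k * qpoch (- c) p k"
  unfolding qpoch_def prod.distrib[symmetric]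
  by (intro prod.cong refl) (simp add: algebra_simps power2_eq_square flip: power_mult)

lemma poly_qpoch: "poly (qpoch P Z k) y = qpoch (poly P y) (poly Z y) k"
  by (simp add: qpoch_def poly_prod)

definition qbinom :: "'a::field \<Rightarrow> nat \<Rightarrow> nat \<Rightarrow> 'a" where
  "qbinom p k j = (if j \<le> k then qpoch p p k / (qpoch p p j * qpoch p p (k - j)) else 0)"

lemma qbinom_0 [simp]: "\<forall>i. 0 < i \<longrightarrow> p ^ i \<noteq> 1 \<Longrightarrow> qbinom p k 0 = 1"
  using qpoch_self_nonzero[of p k] by (simp add: qbinom_def)

lemma qbinom_gt [simp]: "k < j \<Longrightarrow> qbinom p k j = 0"
  by (simp add: qbinom_def)

lemma qbinom_diag [simp]: "\<forall>i. 0 < i \<longrightarrow> p ^ i \<noteq> 1 \<Longrightarrow> qbinom p k k = 1"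
  using qpoch_self_nonzero[of p k] by (simp add: qbinom_def)

lemma fraction_one_minus_mult_split:
  fixes a :: "'a::field"
  assumes "a \<noteq> 0" "c \<noteq> 0" "1 - u \<noteq> 0" "1 - w \<noteq> 0"
  shows "K * (1 - u * w) / (a * (1 - u) * (c * (1 - w))) = K / (a * (c * (1 - w))) + u * (K / (a * (1 - u) * c))"
proof -
  define D where "D = a * (1 - u) * (c * (1 - w))"
  have e1: "K / (a * (c * (1 - w))) = K * (1 - u) / D"
    using assms by (simp add: D_def)
  have e2: "u * (K / (a * (1 - u) * c)) = u * K * (1 - w) / D"
    using assms by (simp add: D_def)
  have "K * (1 - u) / D + u * K * (1 - w) / D = (K * (1 - u) + u * K * (1 - w)) / D"
    by (simp add: add_divide_distrib)
  also have "K * (1 - u) + u * K * (1 - w) = K * (1 - u * w)" by (simp add: algebra_simps)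
  finally show ?thesis unfolding e1 e2 D_def by simp
qed

lemma qbinom_Suc_Suc:
  fixes p :: "'a::field"
  assumes hp: "\<forall>i. 0 < i \<longrightarrow> p ^ i \<noteq> 1"
  shows "qbinom p (Suc k) (Suc j) = qbinom p k j + p ^ Suc j * qbinom p k (Suc j)"
proof (cases "j < k")
  case True
  define l where "l = k - Suc j"
  have kj: "Suc k - Suc j = Suc l" "k - j = Suc l" using True by (simp_all add: l_def)
  define K a c u w where "K = qpoch p p k" and "a = qpoch p p j" and "c = qpoch p p l"
    and "u = p ^ Suc j" and "w = p ^ Suc l"
  have "p * p ^ k = u * w"
    using True by (simp add: u_def w_def l_def mult_ac flip: power_add power_Suc)
  then have Kk: "qpoch p p (Suc k) = K * (1 - u * w)" by (simp add: qpoch_Suc K_def)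
  have "1 - u \<noteq> 0" "1 - w \<noteq> 0" using hp zero_less_Suc unfolding u_def w_def by (metis right_minus_eq)+
  moreover have "a \<noteq> 0" "c \<noteq> 0" using qpoch_self_nonzero[OF hp] by (simp_all add: a_def c_def)
  ultimately have split: "K * (1 - u * w) / (a * (1 - u) * (c * (1 - w)))
      = K / (a * (c * (1 - w))) + u * (K / (a * (1 - u) * c))"
    by (intro fraction_one_minus_mult_split)
  have a': "qpoch p p (Suc j) = a * (1 - u)" by (simp add: qpoch_Suc a_def u_def)
  have c': "qpoch p p (Suc l) = c * (1 - w)" by (simp add: qpoch_Suc c_def w_def)
  have "qbinom p (Suc k) (Suc j) = K * (1 - u * w) / (a * (1 - u) * (c * (1 - w)))"
    using True by (simp add: qbinom_def kj Kk a' c')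
  moreover have "qbinom p k j = K / (a * (c * (1 - w)))"
    using True by (simp add: qbinom_def kj c' K_def a_def)
  moreover have "qbinom p k (Suc j) = K / (a * (1 - u) * c)"
    using True by (simp add: qbinom_def a' K_def c_def l_def)
  ultimately show ?thesis using split by (simp add: u_def)
next
  case False
  then show ?thesis
    using hp by (cases "j = k") simp_all
qed

lemma sum_qbinom_Suc:
  fixes p :: "'a::field"
  assumes hp: "\<forall>i. 0 < i \<longrightarrow> p ^ i \<noteq> 1"
  shows "(\<Sum>j\<le>Suc k. qbinom p (Suc k) j * X j) = (\<Sum>j\<le>k. qbinom p k j * (X (Suc j) + p ^ j * X j))"
proof -
  have shift: "(\<Sum>j\<le>k. p ^ Suc j * qbinom p k (Suc j) * X (Suc j)) = (\<Sum>j\<le>k. p ^ j * qbinom p k j * X j) - X 0"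
    using sum.atMost_Suc_shift[of "\<lambda>j. p ^ j * qbinom p k j * X j" k] hp by simp
  have "(\<Sum>j\<le>Suc k. qbinom p (Suc k) j * X j) = X 0 + (\<Sum>j\<le>k. qbinom p (Suc k) (Suc j) * X (Suc j))"
    unfolding sum.atMost_Suc_shift using hp by simp
  also have "\<dots> = X 0 + (\<Sum>j\<le>k. qbinom p k j * X (Suc j))
      + (\<Sum>j\<le>k. p ^ Suc j * qbinom p k (Suc j) * X (Suc j))"
    by (simp add: qbinom_Suc_Suc[OF hp] algebra_simps sum.distrib)
  also have "\<dots> = (\<Sum>j\<le>k. qbinom p k j * (X (Suc j) + p ^ j * X j))"
    unfolding shift by (simp add: algebra_simps sum.distrib)
  finally show ?thesis .
qed

text \<open>The weights of the q-Chu-Vandermonde expansion of (yu;p)_k in terms of (yv;p)_k.\<close>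

definition chu_weight :: "'a::comm_ring_1 \<Rightarrow> 'a \<Rightarrow> 'a \<Rightarrow> 'a \<Rightarrow> nat \<Rightarrow> 'a" where
  "chu_weight y p u v j = (\<Prod>i<j. y * p ^ i * (v * p ^ i - u))"

lemma chu_weight_Suc: "chu_weight y p u v (Suc j) = chu_weight y p u v j * (y * p ^ j * (v * p ^ j - u))"
  by (simp add: chu_weight_def)

lemma chu_weight_scale: "chu_weight (s * y) p u v j = s ^ j * chu_weight y p u v j"
  by (induction j) (simp_all add: chu_weight_Suc mult_ac chu_weight_def)

lemma qpoch_chu_vandermonde:
  fixes p :: "'a::field"
  assumes hp: "\<forall>i. 0 < i \<longrightarrow> p ^ i \<noteq> 1"
  shows "qpoch (y * u) p k = (\<Sum>j\<le>k. qbinom p k j * chu_weight y p u v j * qpoch (y * v * p ^ j) p (k - j))"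
proof (induction k arbitrary: y)
  case 0
  then show ?case using hp by (simp add: chu_weight_def)
next
  case (Suc k)
  define X where "X j = chu_weight y p u v j * qpoch (y * v * p ^ j) p (Suc k - j)" for j
  have step: "X (Suc j) + p ^ j * X j
      = (1 - y * u) * (chu_weight (p * y) p u v j * qpoch (p * y * v * p ^ j) p (k - j))" if "j \<le> k" for j
  proof -
    have "Suc k - j = Suc (k - j)" "Suc k - Suc j = k - j" using that by auto
    then show ?thesis
      by (simp add: X_def chu_weight_Suc chu_weight_scale qpoch_Suc_left algebra_simps)
  qed
  have "(\<Sum>j\<le>Suc k. qbinom p (Suc k) j * chu_weight y p u v j * qpoch (y * v * p ^ j) p (Suc k - j))
      = (\<Sum>j\<le>k. qbinom p k j * (X (Suc j) + p ^ j * X j))"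
    using sum_qbinom_Suc[OF hp, of k X] by (simp add: X_def mult.assoc)
  also have "\<dots> = (1 - y * u) * qpoch (p * y * u) p k"
    using Suc.IH[of "p * y"] step by (simp add: sum_distrib_left mult_ac)
  also have "\<dots> = qpoch (y * u) p (Suc k)"
    by (simp add: qpoch_Suc_left mult_ac)
  finally show ?case by simp
qed

lemma qpoch_ratio_chu_vandermonde:
  fixes p :: "'a::field"
  assumes hp: "\<forall>i. 0 < i \<longrightarrow> p ^ i \<noteq> 1" and nz: "qpoch (y * v) p k \<noteq> 0"
  shows "qpoch (y * u) p k / qpoch (y * v) p k
    = (\<Sum>j\<le>k. qbinom p k j * chu_weight y p u v j / qpoch (y * v) p j)"
proof -
  have "qpoch (y * u) p k = (\<Sum>j\<le>k. qbinom p k j * chu_weight y p u v j / qpoch (y * v) p j) * qpoch (y * v) p k"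
    unfolding qpoch_chu_vandermonde[OF hp, of y u k v] sum_distrib_right
  proof (rule sum.cong[OF refl])
    fix j assume "j \<in> {..k}"
    then have "j \<le> k" by simp
    with nz show "qbinom p k j * chu_weight y p u v j * qpoch (y * v * p ^ j) p (k - j)
        = qbinom p k j * chu_weight y p u v j / qpoch (y * v) p j * qpoch (y * v) p k"
      using qpoch_nonzero_le[OF nz, of j] by (simp add: qpoch_split[of j k "y * v"])
  qed
  with nz show ?thesis by simp
qed

text \<open>Up to the factor (-1)^m p^(m(m-1)/2 - Mm), this is the q-binomial coefficient [M, m]_p.\<close>

definition neg_qbinom :: "'a::field \<Rightarrow> nat \<Rightarrow> nat \<Rightarrow> 'a" where
  "neg_qbinom p M m = qpoch (inverse p ^ M) p m / qpoch p p m"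

lemma neg_qbinom_0 [simp]: "neg_qbinom p M 0 = 1"
  by (simp add: neg_qbinom_def)

lemma qpoch_inverse_power_eq_0:
  fixes p :: "'a::field"
  assumes "p \<noteq> 0" "M < m"
  shows "qpoch (inverse p ^ M) p m = 0"
proof -
  have "1 - inverse p ^ M * p ^ M = 0" using assms by (simp add: power_inverse)
  then show ?thesis
    using assms(2) unfolding qpoch_def by (metis finite_lessThan lessThan_iff prod_zero)
qed

lemma neg_qbinom_gt: "p \<noteq> 0 \<Longrightarrow> M < m \<Longrightarrow> neg_qbinom p M m = 0"
  by (simp add: neg_qbinom_def qpoch_inverse_power_eq_0)

lemma neg_qbinom_Suc:
  fixes p :: "'a::field"
  assumes p0: "p \<noteq> 0" and hp: "\<forall>i. 0 < i \<longrightarrow> p ^ i \<noteq> 1"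
  shows "p ^ Suc m * neg_qbinom p (Suc M) (Suc m) = neg_qbinom p M (Suc m) - neg_qbinom p M m"
proof -
  define t where "t = inverse p"
  define X where "X = qpoch (t ^ M) p m / (qpoch p p m * (1 - p ^ Suc m))"
  have tp: "t * p = 1" using p0 by (simp add: t_def)
  have "p ^ Suc m \<noteq> 1" using hp by blast
  then have "1 - p ^ Suc m \<noteq> 0" by simp
  then have R2: "neg_qbinom p M m = X * (1 - p ^ Suc m)"
    unfolding neg_qbinom_def t_def[symmetric] by (simp add: X_def)
  have R1: "neg_qbinom p M (Suc m) = X * (1 - t ^ M * p ^ m)"
    unfolding neg_qbinom_def t_def[symmetric] by (simp add: X_def qpoch_Suc mult_ac)
  have tM: "t ^ Suc M * p = t ^ M" using tp by (simp add: mult_ac)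
  have L: "neg_qbinom p (Suc M) (Suc m) = X * (1 - t ^ Suc M)"
    unfolding neg_qbinom_def t_def[symmetric] qpoch_Suc_left[of "t ^ Suc M"] qpoch_Suc[of p p] tM
    by (simp add: X_def mult_ac)
  have "p ^ Suc m * t ^ Suc M = (t * p) * (t ^ M * p ^ m)" by (simp add: mult_ac)
  then have "p ^ Suc m * t ^ Suc M = t ^ M * p ^ m" by (simp add: tp)
  then show ?thesis unfolding L R1 R2 by (simp add: algebra_simps)
qed

lemma sum_neg_qbinom_Suc:
  fixes p :: "'a::field"
  assumes p0: "p \<noteq> 0" and hp: "\<forall>i. 0 < i \<longrightarrow> p ^ i \<noteq> 1"
  shows "(\<Sum>m\<le>Suc M. neg_qbinom p (Suc M) m * p ^ m * F m) = (\<Sum>m\<le>M. neg_qbinom p M m * (F m - F (Suc m)))"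
proof -
  have "(\<Sum>m\<le>Suc M. neg_qbinom p (Suc M) m * p ^ m * F m)
      = F 0 + (\<Sum>m\<le>M. (p ^ Suc m * neg_qbinom p (Suc M) (Suc m)) * F (Suc m))"
    unfolding sum.atMost_Suc_shift by (simp add: mult_ac)
  also have "\<dots> = F 0 + (\<Sum>m\<le>M. (neg_qbinom p M (Suc m) - neg_qbinom p M m) * F (Suc m))"
    by (simp only: neg_qbinom_Suc[OF p0 hp])
  also have "(\<Sum>m\<le>M. neg_qbinom p M (Suc m) * F (Suc m)) = (\<Sum>m\<le>M. neg_qbinom p M m * F m) - F 0"
    using sum.atMost_Suc_shift[of "\<lambda>m. neg_qbinom p M m * F m" M] neg_qbinom_gt[OF p0, of M "Suc M"]
    by simp
  ultimately show ?thesis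
    by (simp add: algebra_simps sum_subtractf)
qed

lemma chu_vandermonde_terminating:
  fixes p :: "'a::field"
  assumes p0: "p \<noteq> 0" and hp: "\<forall>i. 0 < i \<longrightarrow> p ^ i \<noteq> 1"
  shows "(\<Sum>m\<le>M. neg_qbinom p M m * p ^ m * qpoch \<beta> p m * qpoch (\<gamma> * p ^ m) p (M - m))
    = (\<Prod>i<M. \<beta> - \<gamma> * p ^ i)"
proof (induction M arbitrary: \<gamma>)
  case (Suc M)
  define F where "F m = qpoch \<beta> p m * qpoch (\<gamma> * p ^ m) p (Suc M - m)" for m
  have step: "F m - F (Suc m) = (\<beta> - \<gamma>) * (p ^ m * qpoch \<beta> p m * qpoch (\<gamma> * p * p ^ m) p (M - m))"
    if "m \<le> M" for m
  proof -
    have "Suc M - m = Suc (M - m)" using that by simp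
    then have "F m = qpoch \<beta> p m * ((1 - \<gamma> * p ^ m) * qpoch (\<gamma> * p * p ^ m) p (M - m))"
      by (simp add: F_def qpoch_Suc_left mult_ac)
    moreover have "F (Suc m) = qpoch \<beta> p m * (1 - \<beta> * p ^ m) * qpoch (\<gamma> * p * p ^ m) p (M - m)"
      by (simp add: F_def qpoch_Suc mult_ac)
    ultimately show ?thesis by (simp add: algebra_simps)
  qed
  have "(\<Sum>m\<le>Suc M. neg_qbinom p (Suc M) m * p ^ m * qpoch \<beta> p m * qpoch (\<gamma> * p ^ m) p (Suc M - m))
      = (\<Sum>m\<le>M. neg_qbinom p M m * (F m - F (Suc m)))"
    using sum_neg_qbinom_Suc[OF p0 hp, of M F] by (simp add: F_def mult.assoc)
  also have "\<dots> = (\<beta> - \<gamma>) *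
      (\<Sum>m\<le>M. neg_qbinom p M m * p ^ m * qpoch \<beta> p m * qpoch (\<gamma> * p * p ^ m) p (M - m))"
    unfolding sum_distrib_left by (intro sum.cong refl) (simp add: step)
  also have "\<dots> = (\<beta> - \<gamma>) * (\<Prod>i<M. \<beta> - \<gamma> * p * p ^ i)"
    by (simp only: Suc.IH)
  also have "\<dots> = (\<Prod>i<Suc M. \<beta> - \<gamma> * p ^ i)"
    unfolding prod.lessThan_Suc_shift by (simp add: mult_ac)
  finally show ?case .
qed simp

lemma chu_vandermonde_terminating_div:
  fixes p :: "'a::field"
  assumes p0: "p \<noteq> 0" and hp: "\<forall>i. 0 < i \<longrightarrow> p ^ i \<noteq> 1" and nz: "qpoch \<gamma> p M \<noteq> 0"
  shows "(\<Sum>m\<le>M. neg_qbinom p M m * p ^ m * qpoch \<beta> p m / qpoch \<gamma> p m)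
    = (\<Prod>i<M. \<beta> - \<gamma> * p ^ i) / qpoch \<gamma> p M"
proof -
  have "(\<Sum>m\<le>M. neg_qbinom p M m * p ^ m * qpoch \<beta> p m / qpoch \<gamma> p m) * qpoch \<gamma> p M
      = (\<Sum>m\<le>M. neg_qbinom p M m * p ^ m * qpoch \<beta> p m * qpoch (\<gamma> * p ^ m) p (M - m))"
    unfolding sum_distrib_right
    by (intro sum.cong refl) (use qpoch_nonzero_le[OF nz] in \<open>simp add: qpoch_split[of _ M \<gamma>]\<close>)
  also have "\<dots> = (\<Prod>i<M. \<beta> - \<gamma> * p ^ i)" by (rule chu_vandermonde_terminating[OF p0 hp])
  finally show ?thesis using nz by (simp add: field_simps)
qed

lemma sum_triangle_swap:
  fixes f :: "nat \<Rightarrow> nat \<Rightarrow> 'a::comm_monoid_add"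
  shows "(\<Sum>k\<le>N. \<Sum>j\<le>k. f k j) = (\<Sum>j\<le>N. \<Sum>m\<le>N - j. f (j + m) j)"
proof -
  have "(\<Sum>k\<le>N. \<Sum>j\<le>k. f k j) = (\<Sum>(j, m)\<in>{(j, m). j + m \<le> N}. f (j + m) j)"
    using sum.triangle_reindex_eq[of "\<lambda>j m. f (j + m) j" N] by simp
  also have "{(j, m). j + m \<le> N} = Sigma {..N} (\<lambda>j. {..N - j})" by auto
  finally show ?thesis by (simp add: sum.Sigma)
qed

text \<open>The terminating sum to which both sides of the congruence reduce modulo each factor: with
  p = q^2, N = (n - 1)/2 and B the other parameter times q, the condition a q^n = 1 turns
  (aq;q^2)_k into (p^-N;p)_k and (abq^4;q^4)_k into (Bp/p^N;p^2)_k.\<close>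

definition Fsum_coeff :: "'a::field \<Rightarrow> 'a \<Rightarrow> nat \<Rightarrow> nat \<Rightarrow> 'a" where
  "Fsum_coeff p B N k = qpoch (inverse p ^ N) p k * qpoch B p k * p ^ k / qpoch p p k"

definition Fsum :: "'a::field \<Rightarrow> 'a \<Rightarrow> 'a \<Rightarrow> nat \<Rightarrow> 'a" where
  "Fsum p B x N = (\<Sum>k\<le>N. Fsum_coeff p B N k * qpoch x p k / qpoch (B * p / p ^ N) (p ^ 2) k)"

lemma Fsum_eq_sum_lessThan:
  fixes p :: "'a::field"
  assumes "p \<noteq> 0" "N < M"
  shows "Fsum p B x N = (\<Sum>k<M. Fsum_coeff p B N k * qpoch x p k / qpoch (B * p / p ^ N) (p ^ 2) k)"
  unfolding Fsum_def using assms
  by (intro sum.mono_neutral_left) (auto simp: Fsum_coeff_def qpoch_inverse_power_eq_0)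

lemma prod_minus_eq_qpoch_reversed:
  fixes p c :: "'a::field"
  assumes p0: "p \<noteq> 0" and hB: "B = c ^ 2 * p ^ (j + M) / p"
  shows "(\<Prod>i<M. B * p ^ j - (- c * p ^ j) * p ^ i) = (\<Prod>i<M. c * p ^ (j + i)) * qpoch (- c * p ^ j) p M"
proof -
  have "(\<Prod>i<M. c * p ^ (j + i)) * qpoch (- c * p ^ j) p M
      = (\<Prod>i<M. c * p ^ (j + i) * (1 - (- c * p ^ j) * p ^ (M - Suc i)))"
    unfolding qpoch_def prod.nat_diff_reindex[of "\<lambda>i. 1 - (- c * p ^ j) * p ^ i", symmetric]
    by (simp add: prod.distrib)
  also have "\<dots> = (\<Prod>i<M. B * p ^ j - (- c * p ^ j) * p ^ i)"
  proof (rule prod.cong[OF refl])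
    fix i assume "i \<in> {..<M}"
    then have "p ^ (j + i) * p ^ j * p ^ (M - Suc i) * p = p ^ (j + M) * p ^ j"
      by (simp add: add_ac flip: power_add power_Suc2)
    then have "p ^ (j + i) * p ^ j * p ^ (M - Suc i) = p ^ (j + M) * p ^ j / p"
      using p0 by (simp add: field_simps)
    then show "c * p ^ (j + i) * (1 - (- c * p ^ j) * p ^ (M - Suc i)) = B * p ^ j - (- c * p ^ j) * p ^ i"
      by (simp add: hB algebra_simps power2_eq_square power_add)
  qed
  finally show ?thesis by simp
qed

lemma Fsum_inner_sum:
  fixes p c :: "'a::field"
  assumes p0: "p \<noteq> 0" and hp: "\<forall>i. 0 < i \<longrightarrow> p ^ i \<noteq> 1"
    and hc: "\<forall>i. - c * p ^ i \<noteq> 1" and hB: "B = c ^ 2 * p ^ N / p" and jN: "j \<le> N"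
  shows "(\<Sum>m\<le>N - j. Fsum_coeff p B N (j + m) * qbinom p (j + m) j / qpoch (- c) p (j + m))
    = Fsum_coeff p B N j / qpoch (- c) p j * (\<Prod>i<N - j. c * p ^ (j + i))"
proof -
  define M where "M = N - j"
  define \<gamma> where "\<gamma> = - c * p ^ j"
  define E where "E = Fsum_coeff p B N j / qpoch (- c) p j"
  have N: "N = j + M" using jN by (simp add: M_def)
  have nz: "qpoch (- c * p ^ j') p m \<noteq> 0" for j' m
    using hc by (intro qpoch_nonzero) (simp add: mult.assoc flip: power_add)
  have nzP: "qpoch p p m \<noteq> 0" for m by (rule qpoch_self_nonzero[OF hp])
  have nz\<gamma>: "qpoch \<gamma> p M \<noteq> 0" using nz[of j M] by (simp add: \<gamma>_def)
  have summand: "Fsum_coeff p B N (j + m) * qbinom p (j + m) j / qpoch (- c) p (j + m)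
      = E * (neg_qbinom p M m * p ^ m * qpoch (B * p ^ j) p m / qpoch \<gamma> p m)" for m
  proof -
    have "inverse p ^ N * p ^ j = inverse p ^ M"
      using p0 by (simp add: N power_add power_inverse field_simps)
    then have "qpoch (inverse p ^ N) p (j + m) = qpoch (inverse p ^ N) p j * qpoch (inverse p ^ M) p m"
      by (simp add: qpoch_add)
    moreover have "qpoch (- c) p (j + m) = qpoch (- c) p j * qpoch \<gamma> p m"
      unfolding \<gamma>_def by (rule qpoch_add)
    moreover have "qpoch \<gamma> p m \<noteq> 0" "qpoch (- c) p j \<noteq> 0"
      using nz[of j m] nz[of 0 j] by (simp_all add: \<gamma>_def)
    ultimately show ?thesis
      using nzP[of "j + m"] nzP[of j] nzP[of m]
      by (simp add: E_def Fsum_coeff_def neg_qbinom_def qbinom_def qpoch_add power_add field_simps)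
  qed
  have prod: "(\<Prod>i<M. B * p ^ j - \<gamma> * p ^ i) = (\<Prod>i<M. c * p ^ (j + i)) * qpoch \<gamma> p M"
    unfolding \<gamma>_def using p0 hB by (intro prod_minus_eq_qpoch_reversed) (simp_all add: N)
  have "(\<Sum>m\<le>M. Fsum_coeff p B N (j + m) * qbinom p (j + m) j / qpoch (- c) p (j + m))
      = E * (\<Sum>m\<le>M. neg_qbinom p M m * p ^ m * qpoch (B * p ^ j) p m / qpoch \<gamma> p m)"
    by (simp add: summand sum_distrib_left)
  also have "\<dots> = E * ((\<Prod>i<M. B * p ^ j - \<gamma> * p ^ i) / qpoch \<gamma> p M)"
    by (simp only: chu_vandermonde_terminating_div[OF p0 hp nz\<gamma>])
  also have "\<dots> = E * (\<Prod>i<M. c * p ^ (j + i))"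
    using nz\<gamma> by (simp add: prod)
  finally show ?thesis by (simp add: E_def M_def)
qed

lemma Fsum_expand:
  fixes p c :: "'a::field"
  assumes p0: "p \<noteq> 0" and hp: "\<forall>i. 0 < i \<longrightarrow> p ^ i \<noteq> 1"
    and hc: "\<forall>i. c * p ^ i \<noteq> 1 \<and> - c * p ^ i \<noteq> 1" and hB: "B = c ^ 2 * p ^ N / p"
    and yv: "y * v = c"
  shows "Fsum p B (y * u) N = (\<Sum>j\<le>N. chu_weight y p u v j * Fsum_coeff p B N j
    * (\<Prod>i<N - j. c * p ^ (j + i)) / qpoch (c ^ 2) (p ^ 2) j)"
proof -
  have nz1: "qpoch c p m \<noteq> 0" and nz2: "qpoch (- c) p m \<noteq> 0" for m
    using hc by (auto intro!: qpoch_nonzero)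
  have BC: "B * p / p ^ N = c ^ 2" using p0 by (simp add: hB)
  define W where "W j = chu_weight y p u v j / qpoch c p j" for j
  have "Fsum p B (y * u) N
      = (\<Sum>k\<le>N. Fsum_coeff p B N k * (qpoch (y * u) p k / qpoch c p k) / qpoch (- c) p k)"
    unfolding Fsum_def BC qpoch_square by (simp add: field_simps)
  also have "\<dots> = (\<Sum>k\<le>N. \<Sum>j\<le>k. Fsum_coeff p B N k * (qbinom p k j * W j) / qpoch (- c) p k)"
    using qpoch_ratio_chu_vandermonde[OF hp, of y v _ u] nz1
    by (simp add: yv W_def sum_distrib_left sum_divide_distrib mult.assoc)
  also have "\<dots> = (\<Sum>j\<le>N. W j
      * (\<Sum>m\<le>N - j. Fsum_coeff p B N (j + m) * qbinom p (j + m) j / qpoch (- c) p (j + m)))"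
    unfolding sum_triangle_swap by (simp add: sum_distrib_left mult_ac)
  also have "\<dots> = (\<Sum>j\<le>N. W j * (Fsum_coeff p B N j / qpoch (- c) p j * (\<Prod>i<N - j. c * p ^ (j + i))))"
    using Fsum_inner_sum[OF p0 hp _ hB] hc by simp
  also have "\<dots> = (\<Sum>j\<le>N. chu_weight y p u v j * Fsum_coeff p B N j
      * (\<Prod>i<N - j. c * p ^ (j + i)) / qpoch (c ^ 2) (p ^ 2) j)"
    using nz1 nz2 by (simp add: W_def qpoch_square field_simps)
  finally show ?thesis .
qed

lemma Fsum_reflect_square:
  fixes p C x :: "'a::field"
  assumes p0: "p \<noteq> 0" and hp: "\<forall>i. 0 < i \<longrightarrow> p ^ i \<noteq> 1"
    and hC: "\<forall>i. C * p ^ i \<noteq> 1 \<and> C * p ^ i \<noteq> - 1" and hB: "B = C ^ 2 * p ^ N / p"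
  shows "Fsum p B x N = (-1) ^ N * Fsum p B (- x) N"
proof -
  have hC': "\<forall>i. C * p ^ i \<noteq> 1 \<and> - C * p ^ i \<noteq> 1" "\<forall>i. - C * p ^ i \<noteq> 1 \<and> - (- C) * p ^ i \<noteq> 1"
    using hC by (auto simp: minus_equation_iff[of "C * _"])
  have "Fsum p B (1 * x) N = (\<Sum>j\<le>N. chu_weight 1 p x C j * Fsum_coeff p B N j
      * (\<Prod>i<N - j. C * p ^ (j + i)) / qpoch (C ^ 2) (p ^ 2) j)"
    by (rule Fsum_expand[OF p0 hp hC'(1) hB]) simp
  moreover have "Fsum p B ((- 1) * x) N = (\<Sum>j\<le>N. chu_weight (- 1) p x C j * Fsum_coeff p B N j
      * (\<Prod>i<N - j. - C * p ^ (j + i)) / qpoch ((- C) ^ 2) (p ^ 2) j)"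
    by (rule Fsum_expand[OF p0 hp hC'(2)]) (simp_all add: hB)
  moreover have "chu_weight (- 1) p x C j * (\<Prod>i<N - j. - C * p ^ (j + i))
      = (- 1) ^ N * (chu_weight 1 p x C j * (\<Prod>i<N - j. C * p ^ (j + i)))" if "j \<le> N" for j
  proof -
    have "(\<Prod>i<K. - C * p ^ (j + i)) = (- 1) ^ K * (\<Prod>i<K. C * p ^ (j + i))" for K
      by (induction K) (simp_all add: mult_ac)
    moreover have "(- 1 :: 'a) ^ j * (- 1) ^ (N - j) = (- 1) ^ N" using that by (simp flip: power_add)
    ultimately show ?thesis
      using chu_weight_scale[of "- 1" 1 p x C j] by (simp add: mult_ac)
  qed
  ultimately show ?thesis
    by (simp add: sum_distrib_left mult_ac)
qed

text \<open>Cleared of the denominator (Bp/p^N;p^2)_N, the reflection defect is a polynomial in B.\<close>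

lemma Fsum_reflect_of_infinite:
  fixes p x :: "'a::field"
  assumes S: "infinite S"
    and hS: "\<forall>B\<in>S. qpoch (B * p / p ^ N) (p ^ 2) N \<noteq> 0 \<and> Fsum p B x N = (-1) ^ N * Fsum p B (- x) N"
    and h0: "qpoch (B0 * p / p ^ N) (p ^ 2) N \<noteq> 0"
  shows "Fsum p B0 x N = (-1) ^ N * Fsum p B0 (- x) N"
proof -
  define c where "c k = qpoch (inverse p ^ N) p k * p ^ k / qpoch p p k
    * (qpoch x p k - (-1) ^ N * qpoch (- x) p k)" for k
  define \<Psi> where "\<Psi> = (\<Sum>k\<le>N. smult (c k) (qpoch [:0, 1:] [:p:] k
    * qpoch (smult (p / p ^ N * (p ^ 2) ^ k) [:0, 1:]) [:p ^ 2:] (N - k)))"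
  have poly_\<Psi>: "poly \<Psi> B = qpoch (B * p / p ^ N) (p ^ 2) N * (Fsum p B x N - (-1) ^ N * Fsum p B (- x) N)"
    if hB: "qpoch (B * p / p ^ N) (p ^ 2) N \<noteq> 0" for B
  proof -
    have "poly \<Psi> B = (\<Sum>k\<le>N. c k * qpoch B p k * qpoch (B * p / p ^ N * (p ^ 2) ^ k) (p ^ 2) (N - k))"
      unfolding \<Psi>_def poly_sum by (simp add: poly_qpoch mult_ac)
    also have "\<dots> = qpoch (B * p / p ^ N) (p ^ 2) N * (\<Sum>k\<le>N. c k * qpoch B p k / qpoch (B * p / p ^ N) (p ^ 2) k)"
      unfolding sum_distrib_left
      by (intro sum.cong refl) (use qpoch_nonzero_le[OF hB] in \<open>simp add: qpoch_split[of _ N]\<close>)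
    also have "(\<Sum>k\<le>N. c k * qpoch B p k / qpoch (B * p / p ^ N) (p ^ 2) k)
        = Fsum p B x N - (-1) ^ N * Fsum p B (- x) N"
      unfolding Fsum_def sum_distrib_left sum_subtractf[symmetric]
      by (intro sum.cong refl) (simp add: c_def Fsum_coeff_def divide_inverse algebra_simps)
    finally show ?thesis .
  qed
  have "\<Psi> = 0"
  proof (rule ccontr)
    assume "\<Psi> \<noteq> 0"
    then have "finite {B. poly \<Psi> B = 0}" by (rule poly_roots_finite)
    moreover have "S \<subseteq> {B. poly \<Psi> B = 0}" using hS poly_\<Psi> by auto
    ultimately show False using S finite_subset by blast
  qed
  then show ?thesis using poly_\<Psi>[OF h0] h0 by simp
qed

section \<open>Congruences in a localisation\<close>

text \<open>in_loc Q is the localisation at the elements coprime to Q, as a subring of the fraction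
  field.\<close>

definition loc_unit :: "'a::{idom, semiring_gcd} \<Rightarrow> 'a \<Rightarrow> bool" where
  "loc_unit Q d \<longleftrightarrow> d \<noteq> 0 \<and> coprime d Q"

definition in_loc :: "'a::{idom, semiring_gcd} \<Rightarrow> 'a fract \<Rightarrow> bool" where
  "in_loc Q z \<longleftrightarrow> (\<exists>c d. loc_unit Q d \<and> z = Fract c d)"

definition cong_loc :: "'a::{idom, semiring_gcd} \<Rightarrow> 'a \<Rightarrow> 'a fract \<Rightarrow> 'a fract \<Rightarrow> bool" where
  "cong_loc Q P z w \<longleftrightarrow> (\<exists>y. in_loc Q y \<and> z - w = to_fract P * y)"

lemma loc_unit_mult: "loc_unit Q d \<Longrightarrow> loc_unit Q d' \<Longrightarrow> loc_unit Q (d * d')"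
  by (simp add: loc_unit_def)

lemma loc_unit_power: "loc_unit Q d \<Longrightarrow> loc_unit Q (d ^ n)"
  by (simp add: loc_unit_def)

lemma loc_unit_1: "loc_unit Q 1"
  by (simp add: loc_unit_def)

lemma in_loc_Fract: "loc_unit Q d \<Longrightarrow> in_loc Q (Fract c d)"
  by (auto simp: in_loc_def)

lemma in_loc_to_fract: "in_loc Q (to_fract c)"
  by (auto simp: to_fract_def loc_unit_def intro: in_loc_Fract)

lemma in_loc_0: "in_loc Q 0" and in_loc_1: "in_loc Q 1"
  using in_loc_to_fract[of Q 0] in_loc_to_fract[of Q 1] by simp_all

lemma in_loc_inverse: "loc_unit Q d \<Longrightarrow> in_loc Q (inverse (to_fract d))"
  by (simp add: to_fract_def in_loc_Fract)

lemma in_loc_add: "in_loc Q z \<Longrightarrow> in_loc Q w \<Longrightarrow> in_loc Q (z + w)"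
proof -
  assume "in_loc Q z" "in_loc Q w"
  then obtain c d c' d' where "loc_unit Q d" "loc_unit Q d'" "z = Fract c d" "w = Fract c' d'"
    by (auto simp: in_loc_def)
  then show ?thesis
    using in_loc_Fract[OF loc_unit_mult, of Q d d' "c * d' + c' * d"] by (simp add: loc_unit_def)
qed

lemma in_loc_mult: "in_loc Q z \<Longrightarrow> in_loc Q w \<Longrightarrow> in_loc Q (z * w)"
proof -
  assume "in_loc Q z" "in_loc Q w"
  then obtain c d c' d' where "loc_unit Q d" "loc_unit Q d'" "z = Fract c d" "w = Fract c' d'"
    by (auto simp: in_loc_def)
  then show ?thesis
    using in_loc_Fract[OF loc_unit_mult, of Q d d' "c * c'"] by simp
qed

lemma in_loc_uminus: "in_loc Q z \<Longrightarrow> in_loc Q (- z)"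
  unfolding in_loc_def by (metis minus_fract)

lemma in_loc_diff: "in_loc Q z \<Longrightarrow> in_loc Q w \<Longrightarrow> in_loc Q (z - w)"
  using in_loc_add[of Q z "- w"] in_loc_uminus[of Q w] by simp

lemma in_loc_power: "in_loc Q z \<Longrightarrow> in_loc Q (z ^ k)"
  by (induction k) (simp_all add: in_loc_1 in_loc_mult)

lemma in_loc_prod: "(\<And>k. k \<in> A \<Longrightarrow> in_loc Q (f k)) \<Longrightarrow> in_loc Q (prod f A)"
  by (induction A rule: infinite_finite_induct) (simp_all add: in_loc_1 in_loc_mult)

lemma in_loc_qpoch: "in_loc Q y \<Longrightarrow> in_loc Q z \<Longrightarrow> in_loc Q (qpoch y z k)"
  unfolding qpoch_def by (intro in_loc_prod in_loc_diff in_loc_1 in_loc_mult in_loc_power)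

lemma in_loc_inverse_qpoch:
  "(\<And>j. j < k \<Longrightarrow> in_loc Q (inverse (1 - y * z ^ j))) \<Longrightarrow> in_loc Q (inverse (qpoch y z k))"
  unfolding qpoch_def prod_inversef[symmetric] by (intro in_loc_prod) simp

lemma in_loc_inverse_qpoch_Fract:
  assumes "\<And>j. \<exists>c d. loc_unit Q c \<and> loc_unit Q d \<and> 1 - y * z ^ j = Fract c d"
  shows "in_loc Q (inverse (qpoch y z k))" "qpoch y z k \<noteq> 0"
proof -
  have *: "in_loc Q (inverse (1 - y * z ^ j)) \<and> 1 - y * z ^ j \<noteq> 0" for j
    using assms[of j] by (auto simp: loc_unit_def eq_fract Zero_fract_def intro!: in_loc_Fract)
  then show "in_loc Q (inverse (qpoch y z k))"
    by (intro in_loc_inverse_qpoch) blast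
  show "qpoch y z k \<noteq> 0"
    using * by (simp add: qpoch_def)
qed

lemma cong_locI: "in_loc Q y \<Longrightarrow> z - w = to_fract P * y \<Longrightarrow> cong_loc Q P z w"
  by (auto simp: cong_loc_def)

lemma cong_loc_refl: "cong_loc Q P z z"
  by (rule cong_locI[OF in_loc_0]) simp

lemma cong_loc_sym: "cong_loc Q P z w \<Longrightarrow> cong_loc Q P w z"
  unfolding cong_loc_def by (metis in_loc_uminus minus_diff_eq mult_minus_right)

lemma cong_loc_trans: "cong_loc Q P z w \<Longrightarrow> cong_loc Q P w v \<Longrightarrow> cong_loc Q P z v"
  unfolding cong_loc_def by (metis in_loc_add distrib_left diff_add_cancel add_diff_eq)

lemma cong_loc_add: "cong_loc Q P z z' \<Longrightarrow> cong_loc Q P w w' \<Longrightarrow> cong_loc Q P (z + w) (z' + w')"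
  unfolding cong_loc_def by (metis in_loc_add add_diff_add distrib_left)

lemma cong_loc_mult_left: "in_loc Q c \<Longrightarrow> cong_loc Q P z w \<Longrightarrow> cong_loc Q P (c * z) (c * w)"
  unfolding cong_loc_def by (metis in_loc_mult right_diff_distrib mult.left_commute)

lemma cong_loc_mult:
  assumes "cong_loc Q P z z'" "cong_loc Q P w w'" "in_loc Q z" "in_loc Q w'"
  shows "cong_loc Q P (z * w) (z' * w')"
  using cong_loc_mult_left[OF assms(3,2)] cong_loc_mult_left[OF assms(4,1)]
  by (metis cong_loc_trans mult.commute)

lemma cong_loc_sum: "(\<And>k. k \<in> A \<Longrightarrow> cong_loc Q P (f k) (g k)) \<Longrightarrow> cong_loc Q P (sum f A) (sum g A)"
  by (induction A rule: infinite_finite_induct) (simp_all add: cong_loc_refl cong_loc_add)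

lemma cong_loc_prod:
  fixes m :: nat
  shows "(\<And>j. j < m \<Longrightarrow> cong_loc Q P (f j) (g j) \<and> in_loc Q (f j) \<and> in_loc Q (g j))
    \<Longrightarrow> cong_loc Q P (\<Prod>j<m. f j) (\<Prod>j<m. g j)"
proof (induction m)
  case (Suc m)
  have "in_loc Q (\<Prod>j<m. f j)" using Suc.prems by (intro in_loc_prod) simp
  then show ?case using Suc by (simp add: cong_loc_mult)
qed (simp add: cong_loc_refl)

lemma cong_loc_qpoch:
  assumes "cong_loc Q P y y'" "in_loc Q y" "in_loc Q y'" "in_loc Q z"
  shows "cong_loc Q P (qpoch y z k) (qpoch y' z k)"
  unfolding qpoch_def
proof (rule cong_loc_prod)
  fix j
  have "cong_loc Q P (1 + - (z ^ j) * y) (1 + - (z ^ j) * y')"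
    using assms by (intro cong_loc_add cong_loc_refl cong_loc_mult_left in_loc_uminus in_loc_power)
  then show "cong_loc Q P (1 - y * z ^ j) (1 - y' * z ^ j) \<and> in_loc Q (1 - y * z ^ j) \<and> in_loc Q (1 - y' * z ^ j)"
    using assms by (simp add: in_loc_diff in_loc_1 in_loc_mult in_loc_power algebra_simps)
qed

lemma cong_loc_inverse:
  assumes "cong_loc Q P z w" "in_loc Q (inverse z)" "in_loc Q (inverse w)" "z \<noteq> 0" "w \<noteq> 0"
  shows "cong_loc Q P (inverse z) (inverse w)"
proof -
  obtain y where y: "in_loc Q y" "z - w = to_fract P * y" using assms(1) by (auto simp: cong_loc_def)
  have "inverse z - inverse w = - (inverse z * (z - w) * inverse w)"
    using assms(4,5) by (rule inverse_diff_inverse)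
  also have "\<dots> = to_fract P * (- y * inverse z * inverse w)"
    unfolding y(2) by (simp add: algebra_simps)
  finally show ?thesis
    using y assms by (intro cong_locI[of _ "- y * inverse z * inverse w"]) (simp_all add: in_loc_mult in_loc_uminus)
qed

lemma cong_rf_of_cong_loc:
  fixes P1 P2 :: mpoly4
  assumes c1: "cong_loc (P1 * P2) P1 z w" and c2: "cong_loc (P1 * P2) P2 z w" and cp: "coprime P1 P2"
  shows "cong_rf z w (P1 * P2)"
proof -
  obtain c1 d1 where h1: "loc_unit (P1 * P2) d1" "z - w = Fract P1 1 * Fract c1 d1"
    using c1 by (auto simp: cong_loc_def in_loc_def to_fract_def)
  obtain c2 d2 where h2: "loc_unit (P1 * P2) d2" "z - w = Fract P2 1 * Fract c2 d2"
    using c2 by (auto simp: cong_loc_def in_loc_def to_fract_def)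
  have "Fract (P1 * c1) d1 = Fract (P2 * c2) d2" using h1(2) h2(2) by simp
  then have "P2 dvd P1 * (c1 * d2)"
    using h1(1) h2(1) by (simp add: eq_fract loc_unit_def mult.assoc[symmetric])
  moreover have "coprime P2 P1" "coprime P2 d2"
    using cp h2(1) by (simp_all add: coprime_commute loc_unit_def)
  ultimately have "P2 dvd c1" by (simp add: coprime_dvd_mult_right_iff coprime_dvd_mult_left_iff)
  then obtain e where e: "c1 = P2 * e" by (auto simp: dvd_def)
  have "z - w = Fract (P1 * P2) 1 * Fract e 1 / Fract d1 1"
    using h1 by (simp add: e loc_unit_def mult.assoc)
  then show ?thesis unfolding cong_rf_def using h1(1) by (auto simp: loc_unit_def)
qed

section \<open>Reduction of the series modulo 1 - a q^n\<close>

lemma to_fract_power: "to_fract (x ^ n) = to_fract x ^ n"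
  by (induction n) simp_all

lemma varQ_nonzero: "varQ \<noteq> 0"
  by (simp add: varQ_def)

lemma varQ_power_inj: "varQ ^ a = varQ ^ b \<Longrightarrow> a = b"
proof -
  assume "varQ ^ a = varQ ^ b"
  then have "eval_rootA 0 (varQ ^ a) = eval_rootA 0 (varQ ^ b)" by simp
  then show "a = b" by (simp add: eval_rootA_simps)
qed

lemma to_fract_varQ_power_ne:
  assumes "0 < m"
  shows "to_fract varQ ^ m \<noteq> 1" "to_fract varQ ^ m \<noteq> - 1"
proof -
  have "varQ ^ m \<noteq> varQ ^ 0" using varQ_power_inj[of m 0] assms by auto
  then show "to_fract varQ ^ m \<noteq> 1"
    by (metis power_0 to_fract_1 to_fract_eq_iff to_fract_power)
  have "(2::rat) ^ m \<noteq> - 1"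
    by (metis neg_0_less_iff_less not_one_less_zero zero_less_numeral zero_less_power)
  then have "eval_rootA 0 (varQ ^ m) \<noteq> eval_rootA 0 (- 1)"
    by (simp add: eval_rootA_simps)
  then show "to_fract varQ ^ m \<noteq> - 1"
    by (metis to_fract_1 to_fract_eq_iff to_fract_power to_fract_uminus)
qed

definition truncated_series :: "'a::field \<Rightarrow> 'a \<Rightarrow> 'a \<Rightarrow> 'a \<Rightarrow> nat \<Rightarrow> 'a" where
  "truncated_series a b q x n = (\<Sum>k<n. qpoch (a*q) (q^2) k * qpoch (b*q) (q^2) k * qpoch x (q^2) k * q^(2*k)
     / (qpoch (q^2) (q^2) k * qpoch (a*b*q^4) (q^4) k))"

lemma truncated_series_commute: "truncated_series a b q x n = truncated_series b a q x n"
  by (simp add: truncated_series_def mult_ac)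

lemma Fsum_denominator_Fract:
  fixes V :: mpoly4
  defines "q \<equiv> to_fract varQ" and "v \<equiv> to_fract V"
  shows "1 - v * q * q ^ 2 / (q ^ 2) ^ N * ((q ^ 2) ^ 2) ^ j
    = Fract (varQ ^ (2 * N) - V * varQ ^ (4 * j + 3)) (varQ ^ (2 * N))"
proof -
  have "q \<noteq> 0" by (simp add: q_def varQ_nonzero)
  then have "1 - v * q * q ^ 2 / (q ^ 2) ^ N * ((q ^ 2) ^ 2) ^ j
      = (q ^ (2 * N) - v * q ^ (4 * j + 3)) / q ^ (2 * N)"
    by (simp add: field_simps flip: power_mult power_add) (simp add: algebra_simps power_add power3_eq_cube)
  then show ?thesis
    by (simp add: q_def v_def Fract_conv_to_fract to_fract_power)
qed

lemma cong_loc_root: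
  fixes U Q :: mpoly4
  defines "q \<equiv> to_fract varQ"
  assumes "loc_unit Q varQ"
  shows "cong_loc Q (1 - U * varQ ^ Suc (2 * N)) (to_fract U * q) (inverse (q ^ 2) ^ N)"
proof (rule cong_locI)
  have "inverse (q ^ 2) ^ N = inverse (to_fract (varQ ^ (2 * N)))"
    by (simp add: q_def to_fract_power power_mult power_inverse)
  then show "in_loc Q (- (inverse (q ^ 2) ^ N))"
    using assms by (simp add: in_loc_uminus in_loc_inverse loc_unit_power)
  have "q \<noteq> 0" by (simp add: q_def varQ_nonzero)
  then show "to_fract U * q - inverse (q ^ 2) ^ N
      = to_fract (1 - U * varQ ^ Suc (2 * N)) * - (inverse (q ^ 2) ^ N)"
    by (simp add: q_def to_fract_power field_simps flip: power_mult)
qed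

lemma truncated_series_denominators_invertible:
  fixes U V Q :: mpoly4
  defines "q \<equiv> to_fract varQ" and "u \<equiv> to_fract U" and "v \<equiv> to_fract V"
  assumes unitQ: "loc_unit Q varQ"
    and unit1: "\<And>m. 0 < m \<Longrightarrow> loc_unit Q (1 - varQ ^ m)"
    and unit2: "\<And>j. loc_unit Q (1 - U * V * varQ ^ (4 * j + 4))"
    and unit3: "\<And>j. loc_unit Q (varQ ^ (2 * N) - V * varQ ^ (4 * j + 3))"
  shows "in_loc Q (inverse (qpoch (q^2) (q^2) k * qpoch (u * v * q ^ 4) ((q^2) ^ 2) k))"
    and "qpoch (q^2) (q^2) k * qpoch (u * v * q ^ 4) ((q^2) ^ 2) k \<noteq> 0"
    and "in_loc Q (inverse (qpoch (q^2) (q^2) k * qpoch (v * q * q^2 / (q^2) ^ N) ((q^2) ^ 2) k))"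
    and "qpoch (q^2) (q^2) k * qpoch (v * q * q^2 / (q^2) ^ N) ((q^2) ^ 2) k \<noteq> 0"
proof -
  define p where "p = q ^ 2"
  have fac1: "1 - p * p ^ j = Fract (1 - varQ ^ (2 * j + 2)) 1" for j
    by (simp add: p_def q_def to_fract_def [symmetric] to_fract_power flip: power_mult power_add)
  have fac2: "1 - u * v * q ^ 4 * (p ^ 2) ^ j = Fract (1 - U * V * varQ ^ (4 * j + 4)) 1" for j
    by (simp add: p_def q_def u_def v_def to_fract_def [symmetric] to_fract_power mult_ac
        flip: power_mult power_add) (simp add: add.commute)
  have fac3: "1 - v * q * p / p ^ N * (p ^ 2) ^ j
      = Fract (varQ ^ (2 * N) - V * varQ ^ (4 * j + 3)) (varQ ^ (2 * N))" for j
    using Fsum_denominator_Fract[of V N j] by (simp add: p_def q_def v_def)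
  have loc1: "\<exists>c d. loc_unit Q c \<and> loc_unit Q d \<and> 1 - p * p ^ j = Fract c d" for j
    using unit1[of "2 * j + 2"] loc_unit_1 fac1 by (intro exI conjI) simp_all
  have loc2: "\<exists>c d. loc_unit Q c \<and> loc_unit Q d \<and> 1 - u * v * q ^ 4 * (p ^ 2) ^ j = Fract c d" for j
    using unit2 loc_unit_1 fac2 by (intro exI conjI) simp_all
  have loc3: "\<exists>c d. loc_unit Q c \<and> loc_unit Q d \<and> 1 - v * q * p / p ^ N * (p ^ 2) ^ j = Fract c d" for j
    using unit3 loc_unit_power[OF unitQ] fac3 by (intro exI conjI) simp_all
  show "in_loc Q (inverse (qpoch (q^2) (q^2) k * qpoch (u * v * q ^ 4) ((q^2) ^ 2) k))"
    "qpoch (q^2) (q^2) k * qpoch (u * v * q ^ 4) ((q^2) ^ 2) k \<noteq> 0"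
    unfolding p_def[symmetric] inverse_mult_distrib
    using in_loc_inverse_qpoch_Fract[OF loc1, of k] in_loc_inverse_qpoch_Fract[OF loc2, of k]
    by (simp_all add: in_loc_mult)
  show "in_loc Q (inverse (qpoch (q^2) (q^2) k * qpoch (v * q * q^2 / (q^2) ^ N) ((q^2) ^ 2) k))"
    "qpoch (q^2) (q^2) k * qpoch (v * q * q^2 / (q^2) ^ N) ((q^2) ^ 2) k \<noteq> 0"
    unfolding p_def[symmetric] inverse_mult_distrib
    using in_loc_inverse_qpoch_Fract[OF loc1, of k] in_loc_inverse_qpoch_Fract[OF loc3, of k]
    by (simp_all add: in_loc_mult)
qed

lemma truncated_series_summand_cong:
  fixes U V Q :: mpoly4 and x :: ratfun4
  defines "q \<equiv> to_fract varQ" and "u \<equiv> to_fract U" and "v \<equiv> to_fract V"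
  assumes x: "in_loc Q x" and unitQ: "loc_unit Q varQ"
    and unit1: "\<And>m. 0 < m \<Longrightarrow> loc_unit Q (1 - varQ ^ m)"
    and unit2: "\<And>j. loc_unit Q (1 - U * V * varQ ^ (4 * j + 4))"
    and unit3: "\<And>j. loc_unit Q (varQ ^ (2 * N) - V * varQ ^ (4 * j + 3))"
  shows "cong_loc Q (1 - U * varQ ^ Suc (2 * N))
    (qpoch (u*q) (q^2) k * qpoch (v*q) (q^2) k * qpoch x (q^2) k * q^(2*k)
      / (qpoch (q^2) (q^2) k * qpoch (u*v*q^4) (q^4) k))
    (Fsum_coeff (q^2) (v*q) N k * qpoch x (q^2) k / qpoch (v * q * q^2 / (q^2)^N) ((q^2)^2) k)"
proof -
  define p where "p = q ^ 2"
  define t where "t = inverse p ^ N"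
  define P where "P = 1 - U * varQ ^ Suc (2 * N)"
  define R where "R = qpoch (v * q) p k * qpoch x p k * p ^ k"
  define D where "D = qpoch p p k * qpoch (u * v * q ^ 4) (p ^ 2) k"
  define D' where "D' = qpoch p p k * qpoch (v * q * p / p ^ N) (p ^ 2) k"
  have inq: "in_loc Q q" "in_loc Q u" "in_loc Q v" "in_loc Q p"
    by (simp_all add: q_def u_def v_def p_def in_loc_to_fract in_loc_power)
  have it: "in_loc Q t"
    using unitQ by (simp add: t_def p_def q_def power_inverse in_loc_inverse loc_unit_power
        flip: to_fract_power power_mult)
  have root: "cong_loc Q P (u * q) t"
    unfolding P_def t_def p_def u_def q_def by (rule cong_loc_root[OF unitQ])
  have root2: "cong_loc Q P (u * v * q ^ 4) (v * q * p / p ^ N)"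
  proof -
    have "cong_loc Q P (v * q ^ 3 * (u * q)) (v * q ^ 3 * t)"
      using inq by (intro cong_loc_mult_left[OF _ root] in_loc_mult in_loc_power)
    then show ?thesis
      by (simp add: t_def p_def power_inverse divide_inverse algebra_simps power_Suc numeral_eq_Suc)
  qed
  have iR: "in_loc Q R" using inq x by (simp add: R_def in_loc_qpoch in_loc_mult in_loc_power)
  have num: "cong_loc Q P (qpoch (u * q) p k * R) (qpoch t p k * R)"
    using cong_loc_mult_left[OF iR cong_loc_qpoch[OF root _ it inq(4)]] inq
    by (simp add: mult.commute in_loc_mult)
  note inverses = truncated_series_denominators_invertible[OF unitQ unit1 unit2 unit3, of k,
      folded q_def u_def v_def]
  have invD: "in_loc Q (inverse D)" "D \<noteq> 0" and invD': "in_loc Q (inverse D')" "D' \<noteq> 0"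
    unfolding D_def D'_def p_def using inverses by blast+
  have iB: "in_loc Q (v * q * p / p ^ N)"
    using inq it by (simp add: t_def divide_inverse power_inverse in_loc_mult)
  have den: "cong_loc Q P D D'"
    unfolding D_def D'_def using inq root2 iB
    by (intro cong_loc_mult_left cong_loc_qpoch in_loc_qpoch in_loc_mult in_loc_power) simp_all
  have "cong_loc Q P ((qpoch (u * q) p k * R) * inverse D) ((qpoch t p k * R) * inverse D')"
    using inq iR it invD invD'
    by (intro cong_loc_mult[OF num cong_loc_inverse[OF den]] in_loc_mult in_loc_qpoch) simp_all
  moreover have "(qpoch (u * q) p k * R) * inverse D = qpoch (u*q) (q^2) k * qpoch (v*q) (q^2) k
      * qpoch x (q^2) k * q^(2*k) / (qpoch (q^2) (q^2) k * qpoch (u*v*q^4) (q^4) k)"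
    by (simp add: R_def D_def p_def divide_inverse power_mult[symmetric] mult_ac)
  moreover have "(qpoch t p k * R) * inverse D'
      = Fsum_coeff (q^2) (v*q) N k * qpoch x (q^2) k / qpoch (v * q * q^2 / (q^2)^N) ((q^2)^2) k"
    by (simp add: R_def D'_def t_def p_def Fsum_coeff_def divide_inverse mult_ac)
  ultimately show ?thesis by (simp add: P_def)
qed

lemma truncated_series_cong_Fsum:
  fixes U V Q :: mpoly4 and x :: ratfun4
  defines "q \<equiv> to_fract varQ" and "u \<equiv> to_fract U" and "v \<equiv> to_fract V"
  assumes x: "in_loc Q x" and unitQ: "loc_unit Q varQ"
    and unit1: "\<And>m. 0 < m \<Longrightarrow> loc_unit Q (1 - varQ ^ m)"
    and unit2: "\<And>j. loc_unit Q (1 - U * V * varQ ^ (4 * j + 4))"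
    and unit3: "\<And>j. loc_unit Q (varQ ^ (2 * N) - V * varQ ^ (4 * j + 3))"
  shows "cong_loc Q (1 - U * varQ ^ Suc (2 * N))
    (truncated_series u v q x (Suc (2 * N))) (Fsum (q ^ 2) (v * q) x N)"
proof -
  have "cong_loc Q (1 - U * varQ ^ Suc (2 * N)) (truncated_series u v q x (Suc (2 * N)))
      (\<Sum>k<Suc (2 * N). Fsum_coeff (q^2) (v*q) N k * qpoch x (q^2) k / qpoch (v * q * q^2 / (q^2)^N) ((q^2)^2) k)"
    unfolding truncated_series_def q_def u_def v_def
    by (rule cong_loc_sum, rule truncated_series_summand_cong[OF x unitQ unit1 unit2 unit3])
  moreover have "q ^ 2 \<noteq> 0" by (simp add: q_def varQ_nonzero)
  then have "Fsum (q ^ 2) (v * q) x N = (\<Sum>k<Suc (2 * N). Fsum_coeff (q^2) (v*q) N k * qpoch x (q^2) k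
      / qpoch (v * q * q^2 / (q^2)^N) ((q^2)^2) k)"
    by (rule Fsum_eq_sum_lessThan) simp
  ultimately show ?thesis by (simp only:)
qed

lemma power_eq_imp_eq_exp:
  fixes q :: "'a::field"
  assumes q0: "q \<noteq> 0" and not_root: "\<And>m. 0 < m \<Longrightarrow> q ^ m \<noteq> 1" and eq: "q ^ a = q ^ b"
  shows "a = b"
proof (rule ccontr)
  have *: "q ^ i \<noteq> q ^ (i + m)" if "0 < m" for i m
    using q0 not_root[OF that] by (simp add: power_add)
  assume "a \<noteq> b"
  then consider "a < b" | "b < a" by linarith
  then show False
    by cases (use eq *[of "b - a" a] *[of "a - b" b] in auto)
qed

lemma Fsum_reflect_square_power:
  fixes q x :: "'a::field" and i N :: nat
  assumes q0: "q \<noteq> 0" and qne: "\<And>m. 0 < m \<Longrightarrow> q ^ m \<noteq> 1 \<and> q ^ m \<noteq> - 1"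
  defines "B \<equiv> (q ^ Suc i) ^ 2 * (q ^ 2) ^ N / q ^ 2"
  shows "qpoch (B * q ^ 2 / (q ^ 2) ^ N) ((q ^ 2) ^ 2) N \<noteq> 0
    \<and> Fsum (q ^ 2) B x N = (-1) ^ N * Fsum (q ^ 2) B (- x) N"
proof -
  define p where "p = q ^ 2"
  have B: "B = (q ^ Suc i) ^ 2 * p ^ N / p" by (simp add: B_def p_def)
  have p0: "p \<noteq> 0" using q0 by (simp add: p_def)
  have hp: "\<forall>i. 0 < i \<longrightarrow> p ^ i \<noteq> 1"
    using qne by (simp add: p_def power_mult[symmetric])
  have "q ^ Suc i * p ^ j = q ^ (Suc i + 2 * j)" for j
    by (simp only: p_def power_add power_mult)
  then have hC: "\<forall>j. q ^ Suc i * p ^ j \<noteq> 1 \<and> q ^ Suc i * p ^ j \<noteq> - 1"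
    using qne by (metis add_gr_0 zero_less_Suc)
  have "(q ^ Suc i) ^ 2 * (p ^ 2) ^ j \<noteq> 1" for j
  proof -
    have "(q ^ Suc i) ^ 2 * (p ^ 2) ^ j = q ^ (2 * Suc i + 4 * j)"
      by (simp only: p_def power_add power_mult[symmetric] mult.commute) simp
    then show ?thesis using qne[of "2 * Suc i + 4 * j"] by simp
  qed
  then have nz: "qpoch ((q ^ Suc i) ^ 2) (p ^ 2) N \<noteq> 0" by (intro qpoch_nonzero)
  have BC: "B * p / p ^ N = (q ^ Suc i) ^ 2" using p0 by (simp add: B)
  have "Fsum p B x N = (-1) ^ N * Fsum p B (- x) N"
    by (rule Fsum_reflect_square[where C = "q ^ Suc i"]) (fact p0 hp hC B)+
  with nz show ?thesis unfolding p_def[symmetric] BC by (rule conjI)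
qed

lemma Fsum_reflect:
  fixes q B x :: "'a::field"
  assumes q0: "q \<noteq> 0" and qne: "\<And>m. 0 < m \<Longrightarrow> q ^ m \<noteq> 1 \<and> q ^ m \<noteq> - 1"
    and nz: "qpoch (B * q ^ 2 / (q ^ 2) ^ N) ((q ^ 2) ^ 2) N \<noteq> 0"
  shows "Fsum (q ^ 2) B x N = (-1) ^ N * Fsum (q ^ 2) B (- x) N"
proof -
  define p where "p = q ^ 2"
  have p0: "p \<noteq> 0" using q0 by (simp add: p_def)
  have "inj (\<lambda>i. (q ^ Suc i) ^ 2 * p ^ N / p)"
  proof (rule injI)
    fix i j assume "(q ^ Suc i) ^ 2 * p ^ N / p = (q ^ Suc j) ^ 2 * p ^ N / p"
    then have "(q ^ Suc i) ^ 2 = (q ^ Suc j) ^ 2" using p0 by simp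
    then have "q ^ (Suc i * 2) = q ^ (Suc j * 2)" by (simp only: power_mult)
    then have "Suc i * 2 = Suc j * 2" using qne by (intro power_eq_imp_eq_exp[OF q0]) auto
    then show "i = j" by simp
  qed
  then have "infinite (range (\<lambda>i. (q ^ Suc i) ^ 2 * p ^ N / p))"
    using finite_imageD infinite_UNIV_nat by blast
  moreover have "\<forall>B' \<in> range (\<lambda>i. (q ^ Suc i) ^ 2 * p ^ N / p). qpoch (B' * p / p ^ N) (p ^ 2) N \<noteq> 0
      \<and> Fsum p B' x N = (-1) ^ N * Fsum p B' (- x) N"
  proof
    fix B' assume "B' \<in> range (\<lambda>i. (q ^ Suc i) ^ 2 * p ^ N / p)"
    then obtain i where "B' = (q ^ Suc i) ^ 2 * p ^ N / p" by blast
    then show "qpoch (B' * p / p ^ N) (p ^ 2) N \<noteq> 0 \<and> Fsum p B' x N = (-1) ^ N * Fsum p B' (- x) N"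
      unfolding p_def using Fsum_reflect_square_power[OF q0 qne, of i N x] by (simp only: simp_thms)
  qed
  ultimately show ?thesis
    unfolding p_def by (rule Fsum_reflect_of_infinite[OF _ _ nz])
qed

lemma Fsum_reflect_at_q:
  fixes V :: mpoly4 and x :: ratfun4
  defines "q \<equiv> to_fract varQ" and "v \<equiv> to_fract V"
  assumes nz: "\<And>j. varQ ^ (2 * N) - V * varQ ^ (4 * j + 3) \<noteq> 0"
  shows "Fsum (q ^ 2) (v * q) x N = (-1) ^ N * Fsum (q ^ 2) (v * q) (- x) N"
proof (rule Fsum_reflect)
  show "q \<noteq> 0" by (simp add: q_def varQ_nonzero)
  show "q ^ m \<noteq> 1 \<and> q ^ m \<noteq> - 1" if "0 < m" for m
    unfolding q_def using to_fract_varQ_power_ne[OF that] by simp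
  show "qpoch (v * q * q ^ 2 / (q ^ 2) ^ N) ((q ^ 2) ^ 2) N \<noteq> 0"
  proof (rule qpoch_nonzero)
    fix j
    have "varQ ^ (2 * N) \<noteq> 0" using varQ_nonzero by simp
    then have "1 - v * q * q ^ 2 / (q ^ 2) ^ N * ((q ^ 2) ^ 2) ^ j \<noteq> 0"
      unfolding q_def v_def Fsum_denominator_Fract using nz[of j] by (simp add: eq_fract Zero_fract_def)
    then show "v * q * q ^ 2 / (q ^ 2) ^ N * ((q ^ 2) ^ 2) ^ j \<noteq> 1" by simp
  qed
qed

lemma truncated_series_reflect_cong:
  fixes U V Q :: mpoly4 and x :: ratfun4
  defines "q \<equiv> to_fract varQ" and "u \<equiv> to_fract U" and "v \<equiv> to_fract V"
  assumes x: "in_loc Q x" and unitQ: "loc_unit Q varQ"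
    and unit1: "\<And>m. 0 < m \<Longrightarrow> loc_unit Q (1 - varQ ^ m)"
    and unit2: "\<And>j. loc_unit Q (1 - U * V * varQ ^ (4 * j + 4))"
    and unit3: "\<And>j. loc_unit Q (varQ ^ (2 * N) - V * varQ ^ (4 * j + 3))"
  shows "cong_loc Q (1 - U * varQ ^ Suc (2 * N)) (truncated_series u v q x (Suc (2 * N)))
    ((-1) ^ N * truncated_series u v q (- x) (Suc (2 * N)))"
proof -
  have cong: "cong_loc Q (1 - U * varQ ^ Suc (2 * N)) (truncated_series u v q y (Suc (2 * N)))
      (Fsum (q ^ 2) (v * q) y N)" if "in_loc Q y" for y
    unfolding q_def u_def v_def by (rule truncated_series_cong_Fsum[OF that unitQ unit1 unit2 unit3])
  have "Fsum (q ^ 2) (v * q) x N = (-1) ^ N * Fsum (q ^ 2) (v * q) (- x) N"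
    unfolding q_def v_def by (rule Fsum_reflect_at_q) (use unit3 in \<open>simp add: loc_unit_def\<close>)
  with cong[OF x] have "cong_loc Q (1 - U * varQ ^ Suc (2 * N)) (truncated_series u v q x (Suc (2 * N)))
      ((-1) ^ N * Fsum (q ^ 2) (v * q) (- x) N)"
    by (simp only:)
  moreover have "cong_loc Q (1 - U * varQ ^ Suc (2 * N)) ((-1) ^ N * Fsum (q ^ 2) (v * q) (- x) N)
      ((-1) ^ N * truncated_series u v q (- x) (Suc (2 * N)))"
    by (rule cong_loc_mult_left[OF _ cong_loc_sym[OF cong[OF in_loc_uminus[OF x]]]])
      (intro in_loc_power in_loc_uminus in_loc_1)
  ultimately show ?thesis by (rule cong_loc_trans)
qed

lemma two_power_eq_1_iff: "(2::rat) ^ n = 1 \<longleftrightarrow> n = 0"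
  using power_inject_exp[of "2::rat" n 0] by simp

lemma coprime_one_minus_A_B: "0 < n \<Longrightarrow> coprime (1 - varA * varQ ^ n) (1 - varB * varQ ^ n)"
  by (rule coprime_if_eval_nonzero[OF prime_elem_one_minus_B is_ring_hom_eval_rootB])
    (simp_all add: eval_rootB_simps two_power_eq_1_iff)

lemma loc_unit_of_eval_root:
  assumes "eval_rootA n D \<noteq> 0" "eval_rootB n D \<noteq> 0"
  shows "loc_unit ((1 - varA * varQ ^ n) * (1 - varB * varQ ^ n)) D"
  using assms eval_rootA_simps(1)
    coprime_if_eval_nonzero[OF prime_elem_one_minus_A[of n] is_ring_hom_eval_rootA[of n], of D]
    coprime_if_eval_nonzero[OF prime_elem_one_minus_B[of n] is_ring_hom_eval_rootB[of n], of D]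
  by (auto simp: loc_unit_def eval_rootA_simps eval_rootB_simps)

lemma loc_unit_denominators:
  fixes U V :: mpoly4
  assumes n: "n = Suc (2 * N)" and UV: "U * V = varA * varB" and V: "V \<in> {varA, varB}"
  defines "Q \<equiv> (1 - varA * varQ ^ n) * (1 - varB * varQ ^ n)"
  shows "loc_unit Q varQ" and "\<And>m. 0 < m \<Longrightarrow> loc_unit Q (1 - varQ ^ m)"
    and "\<And>j. loc_unit Q (1 - U * V * varQ ^ (4 * j + 4))"
    and "\<And>j. loc_unit Q (varQ ^ (2 * N) - V * varQ ^ (4 * j + 3))"
proof -
  note unit = loc_unit_of_eval_root[of n, folded Q_def]
  show "loc_unit Q varQ" by (rule unit) (simp_all add: eval_rootA_simps eval_rootB_simps)
  show "loc_unit Q (1 - varQ ^ m)" if "0 < m" for m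
    using that by (intro unit) (simp_all add: eval_rootA_simps eval_rootB_simps two_power_eq_1_iff)
  show "loc_unit Q (1 - U * V * varQ ^ (4 * j + 4))" for j
  proof -
    have "(2::rat) ^ (4 * j + 4) \<noteq> 2 ^ n" using n by (simp only: power_inject_exp) presburger
    then show ?thesis unfolding UV
      by (intro unit) (simp_all add: eval_rootA_simps eval_rootB_simps field_simps)
  qed
  show "loc_unit Q (varQ ^ (2 * N) - V * varQ ^ (4 * j + 3))" for j
  proof -
    have ne: "(2::rat) ^ (2 * N) \<noteq> 2 ^ (4 * j + 3)" "(2::rat) ^ (2 * N) * 2 ^ n \<noteq> 2 ^ (4 * j + 3)"
      using n by (simp_all only: power_inject_exp flip: power_add) presburger+
    from V consider "V = varA" | "V = varB" by blast
    then show ?thesis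
      by cases (use ne in \<open>intro unit; simp add: eval_rootA_simps eval_rootB_simps field_simps\<close>)+
  qed
qed

theorem corollary1p6:
  fixes n :: nat
  assumes "odd n"
  defines "a \<equiv> Fract varA 1" and "b \<equiv> Fract varB 1"
      and "q \<equiv> Fract varQ 1" and "x \<equiv> Fract varX 1"
  shows "cong_rf
    (\<Sum>k<n. qpoch (a*q) (q^2) k * qpoch (b*q) (q^2) k * qpoch x (q^2) k * q^(2*k)
            / (qpoch (q^2) (q^2) k * qpoch (a*b*q^4) (q^4) k))
    ((-1) ^ ((n - 1) div 2) *
     (\<Sum>k<n. qpoch (a*q) (q^2) k * qpoch (b*q) (q^2) k * qpoch (-x) (q^2) k * q^(2*k)
            / (qpoch (q^2) (q^2) k * qpoch (a*b*q^4) (q^4) k)))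
    ((1 - varA * varQ ^ n) * (1 - varB * varQ ^ n))"
proof -
  obtain N where n: "n = Suc (2 * N)" using assms(1) by (metis oddE Suc_eq_plus1)
  define Q where "Q = (1 - varA * varQ ^ n) * (1 - varB * varQ ^ n)"
  define S where "S y = truncated_series a b q y n" for y
  have abqx: "a = to_fract varA" "b = to_fract varB" "q = to_fract varQ" "x = to_fract varX"
    by (simp_all add: a_def b_def q_def x_def to_fract_def)
  have x: "in_loc Q x" by (simp add: abqx in_loc_to_fract)
  have "cong_loc Q (1 - varA * varQ ^ n) (S x) ((-1) ^ N * S (- x))"
    using truncated_series_reflect_cong[OF x loc_unit_denominators[OF n, of varA varB, folded Q_def]]
    by (simp add: S_def abqx n)
  moreover have "cong_loc Q (1 - varB * varQ ^ n) (S x) ((-1) ^ N * S (- x))"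
    using truncated_series_reflect_cong[OF x loc_unit_denominators[OF n, of varB varA, folded Q_def]]
    by (simp add: S_def abqx n mult.commute[of varB] truncated_series_commute[of "to_fract varB"])
  ultimately have "cong_rf (S x) ((-1) ^ N * S (- x)) Q"
    unfolding Q_def using coprime_one_minus_A_B[of n] n by (simp add: cong_rf_of_cong_loc)
  then show ?thesis by (simp add: S_def truncated_series_def Q_def n)
qed

end
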